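(* Let $G$ be a finite group of even order. Then the power graph $\mathscr{G}(G)$ is not overfull.
   Context: For a finite group $G$, the power graph $\mathscr{G}(G)$ is the simple graph with vertex set the elements of $G$, in which two distinct elements $a,b$ are adjacent if and only if one is a power of the other. For a finite simple graph $\Gamma$ on $n$ vertices with maximum vertex degree $\Delta(\Gamma)$, $\Gamma$ is called overfull if $|E(\Gamma)| / \lfloor n/2 \rfloor > \Delta(\Gamma)$. *)

theory Defs
  imports Complex_Main "HOL-Algebra.Group"
begin

text \<open>Simple graphs on a finite vertex set V given by a symmetric irreflexive
adjacency relation adj.\<close>

definition graph_edges :: "'a set \<Rightarrow> ('a \<Rightarrow> 'a \<Rightarrow> bool) \<Rightarrow> 'a set set" where
  "graph_edges V adj = {{a, b} | a b. a \<in> V \<and> b \<in> V \<and> a \<noteq> b \<and> adj a b}"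

definition graph_degree :: "'a set \<Rightarrow> ('a \<Rightarrow> 'a \<Rightarrow> bool) \<Rightarrow> 'a \<Rightarrow> nat" where
  "graph_degree V adj v = card {u \<in> V. u \<noteq> v \<and> adj v u}"

definition graph_max_degree :: "'a set \<Rightarrow> ('a \<Rightarrow> 'a \<Rightarrow> bool) \<Rightarrow> nat" where
  "graph_max_degree V adj = Max (graph_degree V adj ` V)"

definition overfull :: "'a set \<Rightarrow> ('a \<Rightarrow> 'a \<Rightarrow> bool) \<Rightarrow> bool" where
  "overfull V adj \<longleftrightarrow>
     real (card (graph_edges V adj)) / real (card V div 2) > real (graph_max_degree V adj)"

definition power_adj :: "('a, 'b) monoid_scheme \<Rightarrow> 'a \<Rightarrow> 'a \<Rightarrow> bool" where
  "power_adj G a b \<longleftrightarrow> a \<noteq> b \<and>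
     ((\<exists>n::int. b = a [^]\<^bsub>G\<^esub> n) \<or> (\<exists>n::int. a = b [^]\<^bsub>G\<^esub> n))"

end

theory Submission
  imports Defs
begin

text \<open>A graph on an even number n of vertices has at most n(n-1)/2 = (n/2)(n-1) edges,
so it can only be overfull if its maximum degree is below n - 1. In a group the identity is
a power of every element, so it is adjacent to all other vertices of the power graph, which
therefore has maximum degree n - 1.\<close>

lemma card_graph_edges_le:
  assumes "finite V"
  shows "card (graph_edges V adj) \<le> card V choose 2"
proof -
  have "graph_edges V adj \<subseteq> {S. S \<subseteq> V \<and> card S = 2}"
    unfolding graph_edges_def by auto
  moreover have "finite {S. S \<subseteq> V \<and> card S = 2}"
    using assms by simp
  ultimately show ?thesis
    using card_mono n_subsets[OF assms, of 2] by fastforce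
qed

lemma graph_degree_le_max_degree:
  assumes "finite V" and "v \<in> V"
  shows "graph_degree V adj v \<le> graph_max_degree V adj"
  unfolding graph_max_degree_def using assms by simp

lemma graph_degree_universal:
  assumes "finite V" and "v \<in> V" and "\<And>u. u \<in> V \<Longrightarrow> u \<noteq> v \<Longrightarrow> adj v u"
  shows "graph_degree V adj v = card V - 1"
proof -
  have "{u \<in> V. u \<noteq> v \<and> adj v u} = V - {v}"
    using assms(3) by auto
  then show ?thesis
    unfolding graph_degree_def using assms(1,2) by simp
qed

lemma not_overfull_if_even_and_max_degree_ge:
  assumes "finite V" and "even (card V)" and "card V - 1 \<le> graph_max_degree V adj"
  shows "\<not> overfull V adj"
proof -
  obtain k where k: "card V = 2 * k"
    using assms(2) by blast
  have "card (graph_edges V adj) \<le> card V choose 2"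
    using card_graph_edges_le[OF assms(1)] .
  also have "\<dots> = k * (card V - 1)"
    using choose_two[of "card V"] k by simp
  also have "\<dots> \<le> k * graph_max_degree V adj"
    using assms(3) by simp
  finally have "real (card (graph_edges V adj)) \<le> real k * real (graph_max_degree V adj)"
    by (metis of_nat_le_iff of_nat_mult)
  then show ?thesis
    unfolding overfull_def using k by (cases "k = 0") (auto simp: field_simps)
qed

lemma (in group) power_adj_one:
  assumes "u \<in> carrier G" and "u \<noteq> \<one>"
  shows "power_adj G \<one> u"
  unfolding power_adj_def using assms by (metis int_pow_0)

theorem mainTheorem3:
  fixes G :: "('a, 'b) monoid_scheme"
  assumes "group G" and "finite (carrier G)" and "even (card (carrier G))"
  shows "\<not> overfull (carrier G) (power_adj G)"
proof -
  interpret group G by fact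
  have "graph_degree (carrier G) (power_adj G) \<one>\<^bsub>G\<^esub> = card (carrier G) - 1"
    using graph_degree_universal[OF assms(2) one_closed] power_adj_one by blast
  then have "card (carrier G) - 1 \<le> graph_max_degree (carrier G) (power_adj G)"
    by (metis graph_degree_le_max_degree[OF assms(2) one_closed])
  then show ?thesis
    using not_overfull_if_even_and_max_degree_ge assms(2,3) by blast
qed

end
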